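(* Let $n \geq 3$ and let $\Omega = \bigcap_{m=0}^q \{u_m \leq 0\} \subset \mathbb{R}^n$ be a compact convex polytope with non-empty interior satisfying the standing assumptions described in the context. Let $\Lambda > 1$ be a constant such that for every $x \in \Omega$ and all nonnegative reals $a_0,\dots,a_q$ with $a_i = 0$ whenever $u_i(x) \leq -2\Lambda^{-1}$, one has $\sum_{i=0}^q a_i \leq \Lambda |\sum_{i=0}^q a_i N_i|$. Then there exists a constant $\Xi \in (2\Lambda,\infty)$ with the following property: whenever $1 \leq k \leq q$, $x \in \Omega$ satisfies $-2\Xi^{-1} \leq u_k(x) \leq 0$, and $a_0,\dots,a_{k-1}$ are nonnegative real numbers such that $a_i = 0$ for all $0 \leq i \leq k-1$ with $u_i(x) \leq -2\Xi^{-1}$, we have \[\sum_{i=0}^{k-1} a_i \leq \Xi \, \Big| \Big( \sum_{i=0}^{k-1} a_i N_i \Big) \wedge N_k \Big|.\]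
   Context: Here $u_0,\dots,u_q$ are non-constant linear (affine) functions on $\mathbb{R}^n$ and $\Omega = \bigcap_{m=0}^q\{u_m\le 0\}$ is compact, convex, with non-empty interior. Standing assumptions: (a) for each $k$, the set $\{u_k>0\}\cap\bigcap_{m\neq k}\{u_m\le 0\}$ is non-empty; (b) the Euclidean gradient of each $u_k$ is a unit vector $N_k\in S^{n-1}$; (c) for $0\le j<k\le q$, if there exists $x\in\Omega$ with $u_j(x)=u_k(x)=0$, then $\langle N_j,N_k\rangle\le 0$. For vectors $v,w\in\mathbb{R}^n$, $|v\wedge w|$ denotes the Euclidean norm of the bivector, i.e. $|v\wedge w|^2=|v|^2|w|^2-\langle v,w\rangle^2$. *)

theory Defs
  imports "HOL-Analysis.Analysis"
begin

text \<open>Euclidean norm of the bivector v wedge w.\<close>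
definition wedge_norm :: "'a::real_inner \<Rightarrow> 'a \<Rightarrow> real" where
  "wedge_norm v w = sqrt ((norm v)\<^sup>2 * (norm w)\<^sup>2 - (v \<bullet> w)\<^sup>2)"

definition aff :: "(nat \<Rightarrow> 'a::real_inner) \<Rightarrow> (nat \<Rightarrow> real) \<Rightarrow> nat \<Rightarrow> 'a \<Rightarrow> real" where
  "aff N c m x = N m \<bullet> x + c m"

definition polytope :: "(nat \<Rightarrow> 'a::real_inner) \<Rightarrow> (nat \<Rightarrow> real) \<Rightarrow> nat \<Rightarrow> 'a set" where
  "polytope N c q = {x. \<forall>m\<le>q. aff N c m x \<le> 0}"

end

theory Submission
  imports Defs
begin

text \<open>
  By compactness there is \<open>e > 0\<close> such that two faces \<open>u\<^sub>j = 0\<close>, \<open>u\<^sub>k = 0\<close> of \<open>\<Omega>\<close> meet as soon as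
  \<open>u\<^sub>j, u\<^sub>k > -e\<close> at some point of \<open>\<Omega>\<close>; take \<open>\<Xi> = 2\<Lambda> + 4/e\<close>. Then every \<open>N\<^sub>i\<close> with
  \<open>a\<^sub>i \<noteq> 0\<close> belongs to a face meeting the face of \<open>u\<^sub>k\<close>, so by (c) the vector \<open>v = \<Sum> a\<^sub>i N\<^sub>i\<close> has
  \<open>s = -\<langle>v, N\<^sub>k\<rangle> \<ge> 0\<close>. Applying the \<open>\<Lambda>\<close>-hypothesis to the coefficients \<open>a\<^sub>0, \<dots>, a\<^sub>k\<^sub>-\<^sub>1, s\<close> gives
  \<open>\<Sum> a\<^sub>i \<le> \<Sum> a\<^sub>i + s \<le> \<Lambda> |v + s N\<^sub>k|\<close>, and \<open>|v + s N\<^sub>k| = |v \<and> N\<^sub>k|\<close> is the length of the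
  component of \<open>v\<close> orthogonal to \<open>N\<^sub>k\<close>.
\<close>

lemma wedge_norm_unit:
  fixes u v :: "'a::real_inner"
  assumes "norm u = 1"
  shows "wedge_norm v u = norm (v - (v \<bullet> u) *\<^sub>R u)"
proof -
  have "u \<bullet> u = 1"
    using assms by (simp add: norm_eq_1)
  then have "(norm (v - (v \<bullet> u) *\<^sub>R u))\<^sup>2 = v \<bullet> v - (v \<bullet> u)\<^sup>2"
    unfolding power2_norm_eq_inner
    by (simp add: inner_diff_left inner_diff_right inner_commute power2_eq_square)
  then show ?thesis
    unfolding wedge_norm_def using assms by (simp add: real_sqrt_unique power2_norm_eq_inner)
qed

lemma wedge_norm_nonneg:
  fixes u v :: "'a::real_inner"
  shows "wedge_norm v u \<ge> 0"
  using Cauchy_Schwarz_ineq[of v u]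
  unfolding wedge_norm_def by (simp add: power2_norm_eq_inner)

lemma sum_atMost_extend:
  fixes f :: "nat \<Rightarrow> 'b::comm_monoid_add"
  assumes "k \<le> q"
  shows "(\<Sum>i\<le>q. if i < k then f i else if i = k then y else 0) = (\<Sum>i<k. f i) + y"
proof -
  have "(\<Sum>i\<le>q. if i < k then f i else if i = k then y else 0)
      = (\<Sum>i\<le>k. if i < k then f i else if i = k then y else 0)"
    using assms by (intro sum.mono_neutral_right) auto
  also have "\<dots> = (\<Sum>i<k. f i) + y"
    by (simp add: lessThan_Suc_atMost[symmetric] add.commute)
  finally show ?thesis .
qed

lemma compact_negative_bounded_away:
  fixes h :: "'a::topological_space \<Rightarrow> real"
  assumes "compact S" "continuous_on S h" "\<And>x. x \<in> S \<Longrightarrow> h x < 0"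
  shows "eventually (\<lambda>e. \<forall>x\<in>S. h x \<le> -e) (at_right 0)"
proof (cases "S = {}")
  case False
  then obtain x0 where "x0 \<in> S" "\<And>x. x \<in> S \<Longrightarrow> h x \<le> h x0"
    using continuous_attains_sup[OF assms(1) False assms(2)] by blast
  with assms(3) show ?thesis
    unfolding eventually_at_right_field by (intro exI[of _ "- h x0"]) force
qed simp

lemma polytope_near_faces_meet:
  fixes N :: "nat \<Rightarrow> 'a::real_inner"
  assumes cpt: "compact (polytope N c q)"
  obtains e :: real where "e > 0"
    "\<And>j k x. j \<le> q \<Longrightarrow> k \<le> q \<Longrightarrow> x \<in> polytope N c q \<Longrightarrow>
       aff N c j x > -e \<Longrightarrow> aff N c k x > -e \<Longrightarrow>
       \<exists>y\<in>polytope N c q. aff N c j y = 0 \<and> aff N c k y = 0"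
proof -
  let ?\<Omega> = "polytope N c q"
  let ?meet = "\<lambda>j k. \<exists>y\<in>?\<Omega>. aff N c j y = 0 \<and> aff N c k y = 0"
  let ?far = "\<lambda>e j k. \<forall>x\<in>?\<Omega>. min (aff N c j x) (aff N c k x) \<le> -e"
  have "eventually (\<lambda>e. ?meet j k \<or> ?far e j k) (at_right 0)" if "j \<le> q" "k \<le> q" for j k
  proof (cases "?meet j k")
    case False
    have "aff N c j x \<le> 0" "aff N c k x \<le> 0" if "x \<in> ?\<Omega>" for x
      using that \<open>j \<le> q\<close> \<open>k \<le> q\<close> unfolding polytope_def by auto
    with False have "min (aff N c j x) (aff N c k x) < 0" if "x \<in> ?\<Omega>" for x
      using that by force
    moreover have "continuous_on ?\<Omega> (\<lambda>x. min (aff N c j x) (aff N c k x))"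
      unfolding aff_def by (intro continuous_intros)
    ultimately have "eventually (\<lambda>e. ?far e j k) (at_right 0)"
      using compact_negative_bounded_away[OF cpt] by blast
    then show ?thesis by (rule eventually_mono) simp
  qed simp
  then have "eventually (\<lambda>e. \<forall>(j, k)\<in>{..q} \<times> {..q}. ?meet j k \<or> ?far e j k) (at_right 0)"
    by (intro eventually_ball_finite) auto
  then obtain b :: real where "b > 0"
    and b: "\<And>e. 0 < e \<Longrightarrow> e < b \<Longrightarrow> \<forall>(j, k)\<in>{..q} \<times> {..q}. ?meet j k \<or> ?far e j k"
    unfolding eventually_at_right_field by auto
  show ?thesis
  proof (rule that[of "b / 2"])
    fix j k x
    assume "j \<le> q" "k \<le> q" "x \<in> ?\<Omega>" "aff N c j x > - (b / 2)" "aff N c k x > - (b / 2)"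
    with b[of "b / 2"] \<open>b > 0\<close> show "?meet j k" by fastforce
  qed (use \<open>b > 0\<close> in simp)
qed

lemma sum_le_wedge_norm_if_obtuse:
  fixes N :: "nat \<Rightarrow> 'a::real_inner" and I :: "nat set"
  assumes bound: "\<And>b. \<forall>i\<le>q. b i \<ge> 0 \<Longrightarrow> \<forall>i\<le>q. i \<in> I \<longrightarrow> b i = 0 \<Longrightarrow>
                  (\<Sum>i\<le>q. b i) \<le> \<Lambda> * norm (\<Sum>i\<le>q. b i *\<^sub>R N i)"
    and k: "k \<le> q" "k \<notin> I" "norm (N k) = 1"
    and a: "\<And>i. i < k \<Longrightarrow> a i \<ge> 0" "\<And>i. i < k \<Longrightarrow> i \<in> I \<Longrightarrow> a i = 0"
    and obtuse: "\<And>i. i < k \<Longrightarrow> a i \<noteq> 0 \<Longrightarrow> N i \<bullet> N k \<le> 0"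
  shows "(\<Sum>i<k. a i) \<le> \<Lambda> * wedge_norm (\<Sum>i<k. a i *\<^sub>R N i) (N k)"
proof -
  define v where "v = (\<Sum>i<k. a i *\<^sub>R N i)"
  define s where "s = - (v \<bullet> N k)"
  define b where "b i = (if i < k then a i else if i = k then s else 0)" for i
  have "v \<bullet> N k = (\<Sum>i<k. a i * (N i \<bullet> N k))"
    unfolding v_def by (simp add: inner_sum_left)
  also have "\<dots> \<le> 0"
    using a(1) obtuse
    by (intro sum_nonpos) (metis lessThan_iff mult_eq_0_iff mult_nonneg_nonpos order_refl)
  finally have "s \<ge> 0"
    by (simp add: s_def)
  have "(\<Sum>i\<le>q. b i *\<^sub>R N i)
      = (\<Sum>i\<le>q. if i < k then a i *\<^sub>R N i else if i = k then s *\<^sub>R N k else 0)"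
    by (intro sum.cong) (auto simp: b_def)
  also have "\<dots> = v + s *\<^sub>R N k"
    using k(1) by (simp add: sum_atMost_extend v_def)
  also have "\<dots> = v - (v \<bullet> N k) *\<^sub>R N k"
    by (simp add: s_def)
  finally have "norm (\<Sum>i\<le>q. b i *\<^sub>R N i) = wedge_norm v (N k)"
    using wedge_norm_unit[OF k(3)] by simp
  moreover have "(\<Sum>i\<le>q. b i) \<le> \<Lambda> * norm (\<Sum>i\<le>q. b i *\<^sub>R N i)"
    using a k(2) \<open>s \<ge> 0\<close> by (intro bound) (auto simp: b_def)
  moreover have "(\<Sum>i\<le>q. b i) = (\<Sum>i<k. a i) + s"
    unfolding b_def using k(1) by (rule sum_atMost_extend)
  ultimately show ?thesis
    using \<open>s \<ge> 0\<close> by (simp add: v_def)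
qed

lemma sum_le_wedge_norm_near_face:
  fixes N :: "nat \<Rightarrow> 'a::real_inner"
  assumes unit: "\<And>k. k \<le> q \<Longrightarrow> norm (N k) = 1"
    and obtuse: "\<And>j k. j < k \<Longrightarrow> k \<le> q \<Longrightarrow>
               (\<exists>x\<in>polytope N c q. aff N c j x = 0 \<and> aff N c k x = 0) \<Longrightarrow> N j \<bullet> N k \<le> 0"
    and bound: "\<And>x b. x \<in> polytope N c q \<Longrightarrow> \<forall>i\<le>q. b i \<ge> 0 \<Longrightarrow>
               \<forall>i\<le>q. aff N c i x \<le> -2 / \<Lambda> \<longrightarrow> b i = 0 \<Longrightarrow>
               (\<Sum>i\<le>q. b i) \<le> \<Lambda> * norm (\<Sum>i\<le>q. b i *\<^sub>R N i)"
    and meet: "\<And>j k x. j \<le> q \<Longrightarrow> k \<le> q \<Longrightarrow> x \<in> polytope N c q \<Longrightarrow>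
               aff N c j x > -e \<Longrightarrow> aff N c k x > -e \<Longrightarrow>
               \<exists>y\<in>polytope N c q. aff N c j y = 0 \<and> aff N c k y = 0"
    and t: "t < e" "t < 2 / \<Lambda>"
    and x: "k \<le> q" "x \<in> polytope N c q" "-t \<le> aff N c k x"
    and a: "\<And>i. i < k \<Longrightarrow> a i \<ge> 0" "\<And>i. i < k \<Longrightarrow> aff N c i x \<le> -t \<Longrightarrow> a i = 0"
  shows "(\<Sum>i<k. a i) \<le> \<Lambda> * wedge_norm (\<Sum>i<k. a i *\<^sub>R N i) (N k)"
proof (rule sum_le_wedge_norm_if_obtuse[where I = "{i. aff N c i x \<le> -2 / \<Lambda>}"])
  show "(\<Sum>i\<le>q. b i) \<le> \<Lambda> * norm (\<Sum>i\<le>q. b i *\<^sub>R N i)"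
    if "\<forall>i\<le>q. b i \<ge> 0" "\<forall>i\<le>q. i \<in> {i. aff N c i x \<le> -2 / \<Lambda>} \<longrightarrow> b i = 0" for b
    using bound[OF x(2)] that by simp
  show "k \<notin> {i. aff N c i x \<le> -2 / \<Lambda>}"
    using x(3) t(2) by simp
  show "a i = 0" if "i < k" "i \<in> {i. aff N c i x \<le> -2 / \<Lambda>}" for i
    using a(2) t(2) that by force
  show "N i \<bullet> N k \<le> 0" if "i < k" "a i \<noteq> 0" for i
  proof (intro obtuse[OF \<open>i < k\<close> x(1)] meet)
    show "aff N c i x > -e" "aff N c k x > -e"
      using a(2) x(3) t(1) that by force+
  qed (use \<open>i < k\<close> x in auto)
qed (use unit a(1) x(1) in auto)

theorem lemma2p4:
  fixes N :: "nat \<Rightarrow> 'a::euclidean_space" and c :: "nat \<Rightarrow> real"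
    and q :: nat and \<Lambda> :: real
  assumes dim: "DIM('a) \<ge> 3"
    and cpt: "compact (polytope N c q)"
    and cvx: "convex (polytope N c q)"
    and int: "interior (polytope N c q) \<noteq> {}"
    and sa: "\<And>k. k \<le> q \<Longrightarrow>
               (\<exists>x. aff N c k x > 0 \<and> (\<forall>m\<le>q. m \<noteq> k \<longrightarrow> aff N c m x \<le> 0))"
    and sb: "\<And>k. k \<le> q \<Longrightarrow> norm (N k) = 1"
    and sc: "\<And>j k. j < k \<Longrightarrow> k \<le> q \<Longrightarrow>
               (\<exists>x\<in>polytope N c q. aff N c j x = 0 \<and> aff N c k x = 0) \<Longrightarrow> N j \<bullet> N k \<le> 0"
    and Lgt: "\<Lambda> > 1"
    and L: "\<And>x a. x \<in> polytope N c q \<Longrightarrow> (\<forall>i\<le>q. a i \<ge> (0::real)) \<Longrightarrow>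
               (\<forall>i\<le>q. aff N c i x \<le> -2 / \<Lambda> \<longrightarrow> a i = 0) \<Longrightarrow>
               (\<Sum>i\<le>q. a i) \<le> \<Lambda> * norm (\<Sum>i\<le>q. a i *\<^sub>R N i)"
  shows "\<exists>\<Xi>>2 * \<Lambda>. \<forall>k x a. 1 \<le> k \<and> k \<le> q \<and> x \<in> polytope N c q \<and>
             -2 / \<Xi> \<le> aff N c k x \<and> aff N c k x \<le> 0 \<and>
             (\<forall>i<k. a i \<ge> (0::real)) \<and>
             (\<forall>i<k. aff N c i x \<le> -2 / \<Xi> \<longrightarrow> a i = 0) \<longrightarrow>
             (\<Sum>i<k. a i) \<le> \<Xi> * wedge_norm (\<Sum>i<k. a i *\<^sub>R N i) (N k)"
proof -
  obtain e where "e > 0" and meet: "\<And>j k x. j \<le> q \<Longrightarrow> k \<le> q \<Longrightarrow> x \<in> polytope N c q \<Longrightarrow>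
      aff N c j x > -e \<Longrightarrow> aff N c k x > -e \<Longrightarrow>
      \<exists>y\<in>polytope N c q. aff N c j y = 0 \<and> aff N c k y = 0"
    using polytope_near_faces_meet[OF cpt] by blast
  define \<Xi> where "\<Xi> = 2 * \<Lambda> + 4 / e"
  have "\<Xi> > 2 * \<Lambda>" "4 / e < \<Xi>"
    using \<open>e > 0\<close> Lgt by (simp_all add: \<Xi>_def)
  have "\<Xi> > 0"
    using \<open>\<Xi> > 2 * \<Lambda>\<close> Lgt by linarith
  have "4 < \<Xi> * e"
    using \<open>4 / e < \<Xi>\<close> \<open>e > 0\<close> by (simp add: pos_divide_less_eq)
  then have "2 / \<Xi> < e"
    using \<open>\<Xi> > 0\<close> by (simp add: pos_divide_less_eq) (simp add: mult.commute)
  have "2 / \<Xi> < 2 / \<Lambda>"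
    using \<open>\<Xi> > 2 * \<Lambda>\<close> Lgt by (intro frac_less2) auto
  show ?thesis
  proof (intro exI[of _ \<Xi>] conjI \<open>\<Xi> > 2 * \<Lambda>\<close> allI impI, elim conjE)
    fix k x and a :: "nat \<Rightarrow> real"
    assume "1 \<le> k" "k \<le> q" "x \<in> polytope N c q" "-2 / \<Xi> \<le> aff N c k x" "aff N c k x \<le> 0"
      "\<forall>i<k. a i \<ge> 0" "\<forall>i<k. aff N c i x \<le> -2 / \<Xi> \<longrightarrow> a i = 0"
    then have "(\<Sum>i<k. a i) \<le> \<Lambda> * wedge_norm (\<Sum>i<k. a i *\<^sub>R N i) (N k)"
      by (intro sum_le_wedge_norm_near_face[OF sb sc L meet \<open>2 / \<Xi> < e\<close> \<open>2 / \<Xi> < 2 / \<Lambda>\<close>])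
        auto
    also have "\<dots> \<le> \<Xi> * wedge_norm (\<Sum>i<k. a i *\<^sub>R N i) (N k)"
      using \<open>\<Xi> > 2 * \<Lambda>\<close> Lgt by (intro mult_right_mono wedge_norm_nonneg) auto
    finally show "(\<Sum>i<k. a i) \<le> \<Xi> * wedge_norm (\<Sum>i<k. a i *\<^sub>R N i) (N k)" .
  qed
qed

end
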